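(* Let $\Bbbk$ be a field of characteristic zero. For all $n\ge-1$, $$\dim\frac{\mathcal F_n\mathcal O}{[\mathcal F_n\mathcal O,\mathcal F_n\mathcal O]}=n+3,\qquad \dim\frac{\mathcal F_n\mathfrak b}{[\mathcal F_n\mathfrak b,\mathcal F_n\mathfrak b]}=2n+4.$$
   Context: The centreless BCCA $\mathfrak b=\mathcal O\ltimes\mathcal P$ has basis $\{\mathcal U_n,\mathcal V_n\mid n\ge-1\}$ ($\mathcal O=\mathrm{span}\{\mathcal U_n\}$, $\mathcal P=\mathrm{span}\{\mathcal V_n\}$) with $[\mathcal U_n,\mathcal U_m]=(n-m)(\mathcal U_{n+m+2}-4\mathcal U_{n+m})$, $[\mathcal U_n,\mathcal V_m]=(n-m+1)\mathcal V_{n+m+2}-4(n-m)\mathcal V_{n+m}$, $[\mathcal V_n,\mathcal V_m]=0$ (concretely, with $s=t+t^{-1}$, $\mathcal U_n=-s^{n+1}(t^2-1)\partial$ in the Witt algebra $\Bbbk[t,t^{-1}]\partial$ and $\mathcal V_n=-s^{n+1}t\,dt^{-1}$ in the tensor density module $t\Bbbk[t,t^{-1}]dt^{-1}$). For $n\ge-1$, $\mathcal F_n\mathcal O=\mathrm{span}\{\mathcal U_k\mid k\ge n\}$ and $\mathcal F_n\mathfrak b=\mathrm{span}\{\mathcal U_k,\mathcal V_k\mid k\ge n\}$. *)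

theory Defs
  imports Complex_Main "HOL-Library.Function_Algebras" "HOL-Library.Product_Plus"
begin

text \<open>Elements of O are coefficient functions int => k (coefficient of U_i at i);
  elements of b = O |x P are pairs (coefficients of U_i, coefficients of V_i).
  All elements we consider are finite linear combinations of basis vectors.\<close>

definition fscale :: "'k::field \<Rightarrow> (int \<Rightarrow> 'k) \<Rightarrow> (int \<Rightarrow> 'k)" where
  "fscale c f = (\<lambda>i. c * f i)"

definition pscale :: "'k::field \<Rightarrow> (int \<Rightarrow> 'k) \<times> (int \<Rightarrow> 'k) \<Rightarrow> (int \<Rightarrow> 'k) \<times> (int \<Rightarrow> 'k)" where
  "pscale c p = (fscale c (fst p), fscale c (snd p))"

definition bvec :: "int \<Rightarrow> int \<Rightarrow> 'k::field" where
  "bvec n = (\<lambda>i. if i = n then 1 else 0)"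

definition suppf :: "(int \<Rightarrow> 'k::field) \<Rightarrow> int set" where
  "suppf f = {i. f i \<noteq> 0}"

definition brUU :: "int \<Rightarrow> int \<Rightarrow> (int \<Rightarrow> 'k::field)" where
  "brUU n m = fscale (of_int (n - m)) (bvec (n + m + 2) - fscale 4 (bvec (n + m)))"

definition brUV :: "int \<Rightarrow> int \<Rightarrow> (int \<Rightarrow> 'k::field)" where
  "brUV n m = fscale (of_int (n - m + 1)) (bvec (n + m + 2)) - fscale (4 * of_int (n - m)) (bvec (n + m))"

definition brO :: "(int \<Rightarrow> 'k::field) \<Rightarrow> (int \<Rightarrow> 'k) \<Rightarrow> (int \<Rightarrow> 'k)" where
  "brO f g = (\<Sum>i\<in>suppf f. \<Sum>j\<in>suppf g. fscale (f i * g j) (brUU i j))"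

definition actOP :: "(int \<Rightarrow> 'k::field) \<Rightarrow> (int \<Rightarrow> 'k) \<Rightarrow> (int \<Rightarrow> 'k)" where
  "actOP f g = (\<Sum>i\<in>suppf f. \<Sum>j\<in>suppf g. fscale (f i * g j) (brUV i j))"

text \<open>[(a1,b1),(a2,b2)] = ([a1,a2], [a1,b2] - [a2,b1]) since [V,V] = 0 and [V,U] = -[U,V].\<close>
definition brB :: "(int \<Rightarrow> 'k::field) \<times> (int \<Rightarrow> 'k) \<Rightarrow> (int \<Rightarrow> 'k) \<times> (int \<Rightarrow> 'k) \<Rightarrow> (int \<Rightarrow> 'k) \<times> (int \<Rightarrow> 'k)" where
  "brB p q = (brO (fst p) (fst q), actOP (fst p) (snd q) - actOP (fst q) (snd p))"

definition FO :: "int \<Rightarrow> (int \<Rightarrow> 'k::field) set" where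
  "FO n = module.span fscale {bvec k | k. k \<ge> n}"

definition Fb :: "int \<Rightarrow> ((int \<Rightarrow> 'k::field) \<times> (int \<Rightarrow> 'k)) set" where
  "Fb n = module.span pscale ({(bvec k, 0) | k. k \<ge> n} \<union> {(0, bvec k) | k. k \<ge> n})"

definition derived :: "('k::field \<Rightarrow> 'b \<Rightarrow> 'b::ab_group_add) \<Rightarrow> ('b \<Rightarrow> 'b \<Rightarrow> 'b) \<Rightarrow> 'b set \<Rightarrow> 'b set" where
  "derived s br L = module.span s {br x y | x y. x \<in> L \<and> y \<in> L}"

text \<open>Dimension of the quotient space V / W (W a subspace of V): the cardinality of a finite
  set S of V whose cosets s + W form a basis of V/W, i.e. S is linearly independent modulo W
  and S together with W spans V.\<close>
definition quot_dim :: "('k::field \<Rightarrow> 'b \<Rightarrow> 'b::ab_group_add) \<Rightarrow> 'b set \<Rightarrow> 'b set \<Rightarrow> nat" where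
  "quot_dim s V W = (THE d. \<exists>S. S \<subseteq> V \<and> finite S \<and> card S = d \<and>
      (\<forall>c. (\<Sum>x\<in>S. s (c x) x) \<in> W \<longrightarrow> (\<forall>x\<in>S. c x = 0)) \<and>
      V \<subseteq> module.span s (S \<union> W))"

end

theory Submission
  imports Defs
begin

(* Modulo [F_n O, F_n O] = span {(a - b) (U_(a+b+2) - 4 U_(a+b)) | a, b >= n} every U_k with
   k > 2n + 2 is congruent to 4 U_(k-2) (take a = k - 2 - n, b = n; in characteristic zero a - b
   is invertible), so U_n, ..., U_(2n+2) span the quotient.  They are independent modulo the
   brackets because the linear map sending U_k to 4^m U_(k-2m), with k - 2m in {2n+1, 2n+2}
   when k > 2n + 2, kills every bracket and fixes them.  In b the brackets [U_a, V_b] give in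
   addition every V_k with k > 2n ([U_n, V_(n+1)] = 4 V_(2n+1), [U_n, V_n] = V_(2n+2) and a
   recursion), and none of them involves V_n, ..., V_(2n); so the quotient has the basis
   U_n, ..., U_(2n+2), V_n, ..., V_(2n) of size (n + 3) + (n + 1). *)

section \<open>Quotient dimension via a projection\<close>

(* The projections used below are linear only on finitely supported functions. *)
definition linear_on :: "('a::field \<Rightarrow> 'b \<Rightarrow> 'b::ab_group_add) \<Rightarrow> 'b set \<Rightarrow> ('b \<Rightarrow> 'b) \<Rightarrow> bool" where
  "linear_on s D f \<longleftrightarrow> (\<forall>x\<in>D. \<forall>y\<in>D. f (x + y) = f x + f y) \<and> (\<forall>c. \<forall>x\<in>D. f (s c x) = s c (f x))"

definition quot_basis :: "('a::field \<Rightarrow> 'b \<Rightarrow> 'b::ab_group_add) \<Rightarrow> 'b set \<Rightarrow> 'b set \<Rightarrow> 'b set \<Rightarrow> bool" where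
  "quot_basis s V W S \<longleftrightarrow> S \<subseteq> V \<and> finite S \<and>
     (\<forall>c. (\<Sum>x\<in>S. s (c x) x) \<in> W \<longrightarrow> (\<forall>x\<in>S. c x = 0)) \<and> V \<subseteq> module.span s (S \<union> W)"

context vector_space
begin

lemma quot_dim_eqI:
  assumes "quot_basis scale V W B" and "\<And>S. quot_basis scale V W S \<Longrightarrow> card S = card B"
  shows "quot_dim scale V W = card B"
  unfolding quot_dim_def
proof (rule the_equality)
  show "\<exists>S. S \<subseteq> V \<and> finite S \<and> card S = card B \<and>
      (\<forall>c. (\<Sum>x\<in>S. c x *s x) \<in> W \<longrightarrow> (\<forall>x\<in>S. c x = 0)) \<and> V \<subseteq> span (S \<union> W)"
    using assms(1) unfolding quot_basis_def by blast
qed (use assms(2) in \<open>auto simp: quot_basis_def\<close>)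

lemma linear_on_0:
  assumes "linear_on scale D f" "0 \<in> D"
  shows "f 0 = 0"
  using assms scale_zero_left unfolding linear_on_def by metis

lemma linear_on_diff:
  assumes "linear_on scale D f" "subspace D" "x \<in> D" "y \<in> D"
  shows "f (x - y) = f x - f y"
proof -
  have "f (x - y) + f y = f (x - y + y)"
    using assms subspace_diff unfolding linear_on_def by metis
  then show ?thesis by (simp add: algebra_simps)
qed

lemma linear_on_sum:
  assumes "linear_on scale D f" "subspace D" "\<And>x. x \<in> A \<Longrightarrow> g x \<in> D"
  shows "f (\<Sum>x\<in>A. g x) = (\<Sum>x\<in>A. f (g x))"
  using assms(3)
proof (induction A rule: infinite_finite_induct)
  case (insert x A)
  then have "sum g A \<in> D" using assms(2) subspace_sum by blast
  then show ?case using insert assms(1) unfolding linear_on_def by simp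
qed (use assms linear_on_0 subspace_0 in auto)

lemma subspace_vimage_on:
  assumes "linear_on scale D f" "subspace D" "subspace S"
  shows "subspace {x \<in> D. f x \<in> S}"
  using assms linear_on_0[OF assms(1)] unfolding subspace_def linear_on_def by auto

lemma linear_on_span_image_subset:
  assumes "linear_on scale D f" "subspace D" "subspace S" "G \<subseteq> D" "\<And>g. g \<in> G \<Longrightarrow> f g \<in> S"
    and "v \<in> span G"
  shows "f v \<in> S"
  using span_minimal[of G "{x \<in> D. f x \<in> S}"] subspace_vimage_on[OF assms(1-3)] assms(4-6) by auto

lemma independent_if_biorthogonal:
  assumes "\<And>b. b \<in> B \<Longrightarrow> \<exists>l. Vector_Spaces.linear scale (*) l \<and> l b \<noteq> 0 \<and> (\<forall>b'\<in>B - {b}. l b' = 0)"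
  shows "independent B"
  unfolding independent_explicit_module
proof (intro allI impI)
  fix t u v assume t: "finite t" "t \<subseteq> B" and sum: "(\<Sum>v\<in>t. u v *s v) = 0" and v: "v \<in> t"
  obtain l where l: "Vector_Spaces.linear scale (*) l" "l v \<noteq> 0" "\<forall>b'\<in>B - {v}. l b' = 0"
    using assms t(2) v by blast
  interpret l: Vector_Spaces.linear scale "(*)" l by (rule l(1))
  have "0 = l (\<Sum>v\<in>t. u v *s v)" using sum by simp
  also have "\<dots> = (\<Sum>x\<in>t. u x * l x)" by (simp add: l.sum l.scale)
  also have "\<dots> = u v * l v + (\<Sum>x\<in>t - {v}. u x * l x)" by (rule sum.remove[OF t(1) v])
  also have "(\<Sum>x\<in>t - {v}. u x * l x) = 0" using t(2) l(3) by (intro sum.neutral) auto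
  finally show "u v = 0" using l(2) by simp
qed

end

locale quotient_projection = vector_space +
  fixes D V W B :: "'b set" and proj :: "'b \<Rightarrow> 'b"
  assumes subspace_D: "subspace D"
    and subspace_V: "subspace V" and V_subset: "V \<subseteq> D"
    and subspace_W: "subspace W" and W_subset: "W \<subseteq> D"
    and linear_proj: "linear_on scale D proj"
    and proj_W: "\<And>w. w \<in> W \<Longrightarrow> proj w = 0"
    and minus_proj_in_W: "\<And>v. v \<in> V \<Longrightarrow> v - proj v \<in> W"
    and proj_in_span_B: "\<And>v. v \<in> V \<Longrightarrow> proj v \<in> span B"
    and B_subset: "B \<subseteq> V" and finite_B: "finite B" and independent_B: "independent B"
    and proj_B: "\<And>b. b \<in> B \<Longrightarrow> proj b = b"
begin

lemma proj_lincomb: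
  assumes "S \<subseteq> D"
  shows "proj (\<Sum>x\<in>S. c x *s x) = (\<Sum>x\<in>S. c x *s proj x)"
proof -
  have "proj (\<Sum>x\<in>S. c x *s x) = (\<Sum>x\<in>S. proj (c x *s x))"
    using assms by (intro linear_on_sum[OF linear_proj subspace_D] subspace_scale[OF subspace_D]) auto
  also have "\<dots> = (\<Sum>x\<in>S. c x *s proj x)"
    using assms linear_proj unfolding linear_on_def by (intro sum.cong) auto
  finally show ?thesis .
qed

lemma quot_basis_B: "quot_basis scale V W B"
  unfolding quot_basis_def
proof (intro conjI allI impI ballI)
  fix c x assume W: "(\<Sum>x\<in>B. c x *s x) \<in> W" and x: "x \<in> B"
  have "(\<Sum>x\<in>B. c x *s x) = proj (\<Sum>x\<in>B. c x *s x)"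
    using B_subset V_subset by (simp add: proj_lincomb proj_B)
  also have "\<dots> = 0" using proj_W[OF W] .
  finally show "c x = 0" using independentD[OF independent_B finite_B] x by blast
next
  show "V \<subseteq> span (B \<union> W)"
  proof
    fix v assume v: "v \<in> V"
    have "proj v + (v - proj v) \<in> span (B \<union> W)"
      using proj_in_span_B[OF v] minus_proj_in_W[OF v]
      by (meson span_add span_mono sup_ge1 sup_ge2 span_superset subsetD)
    then show "v \<in> span (B \<union> W)" by simp
  qed
qed (use B_subset finite_B in auto)

lemma inj_on_independent_proj:
  assumes SV: "S \<subseteq> V" and fin: "finite S"
    and indep: "\<And>c. (\<Sum>x\<in>S. c x *s x) \<in> W \<Longrightarrow> \<forall>x\<in>S. c x = 0"
  shows "inj_on proj S" "independent (proj ` S)"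
proof -
  have lincomb_in_W: "(\<Sum>x\<in>S. c x *s x) \<in> W" if "(\<Sum>x\<in>S. c x *s proj x) = 0" for c
  proof -
    have "(\<Sum>x\<in>S. c x *s x) - proj (\<Sum>x\<in>S. c x *s x) \<in> W"
      using SV by (intro minus_proj_in_W subspace_sum[OF subspace_V] subspace_scale[OF subspace_V]) auto
    then show ?thesis using that SV V_subset by (simp add: proj_lincomb[OF subset_trans])
  qed
  show inj: "inj_on proj S"
  proof (rule inj_onI, rule ccontr)
    fix x y assume xy: "x \<in> S" "y \<in> S" "proj x = proj y" "x \<noteq> y"
    define c :: "'b \<Rightarrow> 'a" where "c z = (if z = x then 1 else if z = y then -1 else 0)" for z
    have "(\<Sum>z\<in>S. c z *s proj z) = (\<Sum>z\<in>{x, y}. c z *s proj z)"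
      using fin xy by (intro sum.mono_neutral_right) (auto simp: c_def)
    also have "\<dots> = 0" using xy by (simp add: c_def)
    finally have "c x = 0" using indep[OF lincomb_in_W] xy by blast
    then show False by (simp add: c_def)
  qed
  show "independent (proj ` S)"
  proof
    assume "dependent (proj ` S)"
    then obtain u where u: "\<exists>v\<in>proj ` S. u v \<noteq> 0" "(\<Sum>v\<in>proj ` S. u v *s v) = 0"
      using dependent_finite[OF finite_imageI[OF fin]] by auto
    then have "(\<Sum>x\<in>S. u (proj x) *s proj x) = 0" by (simp add: sum.reindex[OF inj])
    then show False using indep[OF lincomb_in_W[of "\<lambda>x. u (proj x)"]] u(1) by auto
  qed
qed

lemma card_quot_basis:
  assumes S: "quot_basis scale V W S"
  shows "card S = card B"
proof -
  have SV: "S \<subseteq> V" and fin: "finite S"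
    and indep: "\<And>c. (\<Sum>x\<in>S. c x *s x) \<in> W \<Longrightarrow> \<forall>x\<in>S. c x = 0"
    and spanning: "V \<subseteq> span (S \<union> W)"
    using S unfolding quot_basis_def by blast+
  note inj_indep = inj_on_independent_proj[OF SV fin indep]
  have "proj ` S \<subseteq> span B" using proj_in_span_B SV by blast
  moreover have "B \<subseteq> span (proj ` S)"
  proof
    fix b assume b: "b \<in> B"
    have "proj b \<in> span (proj ` S)"
    proof (rule linear_on_span_image_subset[OF linear_proj subspace_D subspace_span])
      show "S \<union> W \<subseteq> D" using SV V_subset W_subset by blast
      show "b \<in> span (S \<union> W)" using b B_subset spanning by blast
    qed (auto simp: proj_W span_base span_zero)
    then show "b \<in> span (proj ` S)" using proj_B[OF b] by simp
  qed
  ultimately have "card (proj ` S) = card B"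
    using independent_span_bound[OF finite_B inj_indep(2)] independent_span_bound[OF _ independent_B] fin
    by (simp add: le_antisym)
  then show ?thesis using card_image[OF inj_indep(1)] by simp
qed

theorem quot_dim_eq_card: "quot_dim scale V W = card B"
  using quot_dim_eqI quot_basis_B card_quot_basis by blast

end

lemma (in vector_space) quotient_projection_spanI:
  assumes "subspace D" "G \<subseteq> D" "H \<subseteq> D" "linear_on scale D proj"
    and "\<And>h. h \<in> H \<Longrightarrow> proj h = 0"
    and "\<And>g. g \<in> G \<Longrightarrow> g - proj g \<in> span H"
    and "\<And>g. g \<in> G \<Longrightarrow> proj g \<in> span B"
    and "B \<subseteq> span G" "finite B" "independent B" "\<And>b. b \<in> B \<Longrightarrow> proj b = b"
  shows "quotient_projection scale D (span G) (span H) B proj"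
proof unfold_locales
  have lin_id_minus: "linear_on scale D (\<lambda>x. x - proj x)"
    using assms(1,4) unfolding linear_on_def by (simp add: algebra_simps scale_right_diff_distrib)
  show "span G \<subseteq> D" "span H \<subseteq> D" using assms(1-3) span_minimal by blast+
  show "proj w = 0" if "w \<in> span H" for w
    using linear_on_span_image_subset[OF assms(4,1) subspace_single_0 assms(3)] assms(5) that by simp
  show "v - proj v \<in> span H" if "v \<in> span G" for v
    using linear_on_span_image_subset[OF lin_id_minus assms(1) subspace_span assms(2)] assms(6) that
    by blast
  show "proj v \<in> span B" if "v \<in> span G" for v
    using linear_on_span_image_subset[OF assms(4,1) subspace_span assms(2)] assms(7) that by blast
qed (use assms in auto)

section \<open>Finitely supported coefficient functions\<close>

interpretation fs: vector_space "fscale :: 'k::field \<Rightarrow> _"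
  by unfold_locales (auto simp: fscale_def fun_eq_iff algebra_simps)

interpretation ps: vector_space "pscale :: 'k::field \<Rightarrow> _"
  by unfold_locales (auto simp: pscale_def fscale_def fun_eq_iff algebra_simps)

lemma fscale_apply [simp]: "fscale c f i = c * f i"
  by (simp add: fscale_def)

lemma pscale_Pair [simp]: "pscale c (f, g) = (fscale c f, fscale c g)"
  by (simp add: pscale_def)

lemma bvec_apply: "bvec k i = (if i = k then 1 else 0)"
  by (simp add: bvec_def)

lemma bvec_eq_iff [simp]: "(bvec a :: int \<Rightarrow> 'k::field) = bvec b \<longleftrightarrow> a = b"
  by (auto simp: bvec_def fun_eq_iff)

lemma bvec_neq_0 [simp]: "(bvec a :: int \<Rightarrow> 'k::field) \<noteq> 0"
  by (auto simp: bvec_def fun_eq_iff)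

lemma suppf_bvec [simp]: "suppf (bvec a :: int \<Rightarrow> 'k::field) = {a}"
  by (auto simp: suppf_def bvec_def)

definition finsupp :: "(int \<Rightarrow> 'k::field) set" where
  "finsupp = {f. finite (suppf f)}"

lemma bvec_in_finsupp [simp]: "bvec a \<in> finsupp"
  by (simp add: finsupp_def)

lemma zero_in_finsupp [simp]: "0 \<in> finsupp"
  by (simp add: finsupp_def suppf_def)

lemma subspace_finsupp: "fs.subspace (finsupp :: (int \<Rightarrow> 'k::field) set)"
  unfolding fs.subspace_def finsupp_def
proof (intro conjI ballI allI; clarsimp)
  show "finite (suppf (0 :: int \<Rightarrow> 'k))" by (simp add: suppf_def)
  show "finite (suppf (x + y))" if "finite (suppf x)" "finite (suppf y)" for x y :: "int \<Rightarrow> 'k"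
    using that by (rule finite_subset[rotated, OF finite_UnI]) (auto simp: suppf_def)
  show "finite (suppf (fscale c x))" if "finite (suppf x)" for c and x :: "int \<Rightarrow> 'k"
    using that by (rule finite_subset[rotated]) (auto simp: suppf_def)
qed

lemma subspace_Times: "fs.subspace A \<Longrightarrow> fs.subspace B \<Longrightarrow> ps.subspace (A \<times> B)"
  by (auto simp: fs.subspace_def ps.subspace_def pscale_def zero_prod_def)

lemma module_hom_Pair_0: "module_hom fscale pscale (\<lambda>f :: int \<Rightarrow> 'k::field. (f, 0))"
  by unfold_locales auto

lemma module_hom_0_Pair: "module_hom fscale pscale (\<lambda>g :: int \<Rightarrow> 'k::field. (0, g))"
  by unfold_locales auto

lemma linear_on_Pair:
  assumes "linear_on fscale A f" "linear_on fscale B g"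
  shows "linear_on pscale (A \<times> B) (\<lambda>p. (f (fst p), g (snd p)))"
  using assms by (auto simp: linear_on_def pscale_def)

(* The linear extension of e along the basis bvec.  For infinitely supported f the sum is 0,
   so lin_ext e is only meaningful on finsupp. *)
definition lin_ext :: "(int \<Rightarrow> int \<Rightarrow> 'k::field) \<Rightarrow> (int \<Rightarrow> 'k) \<Rightarrow> (int \<Rightarrow> 'k)" where
  "lin_ext e f = (\<Sum>k\<in>suppf f. fscale (f k) (e k))"

lemma lin_ext_eq_sum:
  assumes "finite I" "suppf f \<subseteq> I"
  shows "lin_ext e f = (\<Sum>k\<in>I. fscale (f k) (e k))"
  unfolding lin_ext_def using assms
  by (intro sum.mono_neutral_left) (auto simp: suppf_def fscale_def fun_eq_iff)

lemma lin_ext_0 [simp]: "lin_ext e 0 = (0 :: int \<Rightarrow> 'k::field)"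
  by (simp add: lin_ext_def suppf_def)

lemma lin_ext_bvec [simp]: "lin_ext e (bvec k) = (e k :: int \<Rightarrow> 'k::field)"
  unfolding lin_ext_def suppf_bvec by (simp add: bvec_def fun_eq_iff)

lemma lin_ext_add:
  assumes "f \<in> finsupp" "g \<in> finsupp"
  shows "lin_ext e (f + g) = lin_ext e f + (lin_ext e g :: int \<Rightarrow> 'k::field)"
proof -
  let ?I = "suppf f \<union> suppf g"
  have fin: "finite ?I" using assms by (simp add: finsupp_def)
  have "lin_ext e (f + g) = (\<Sum>k\<in>?I. fscale ((f + g) k) (e k))"
    using fin by (intro lin_ext_eq_sum) (auto simp: suppf_def)
  also have "\<dots> = (\<Sum>k\<in>?I. fscale (f k) (e k)) + (\<Sum>k\<in>?I. fscale (g k) (e k))"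
    by (simp add: fs.scale_left_distrib sum.distrib)
  also have "\<dots> = lin_ext e f + lin_ext e g"
    using fin by (simp add: lin_ext_eq_sum[of ?I])
  finally show ?thesis .
qed

lemma lin_ext_fscale:
  assumes "f \<in> finsupp"
  shows "lin_ext e (fscale c f) = fscale c (lin_ext e f :: int \<Rightarrow> 'k::field)"
proof -
  have "lin_ext e (fscale c f) = (\<Sum>k\<in>suppf f. fscale (c * f k) (e k))"
    using assms lin_ext_eq_sum[of "suppf f" "fscale c f" e] by (auto simp: finsupp_def suppf_def)
  also have "\<dots> = fscale c (lin_ext e f)"
    by (simp add: lin_ext_def fs.scale_sum_right fs.scale_scale)
  finally show ?thesis .
qed

lemma linear_on_lin_ext: "linear_on fscale finsupp (lin_ext e :: (int \<Rightarrow> 'k::field) \<Rightarrow> _)"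
  by (simp add: linear_on_def lin_ext_add lin_ext_fscale)

lemma lin_ext_diff:
  "f \<in> finsupp \<Longrightarrow> g \<in> finsupp \<Longrightarrow> lin_ext e (f - g) = lin_ext e f - (lin_ext e g :: int \<Rightarrow> 'k::field)"
  by (rule fs.linear_on_diff[OF linear_on_lin_ext subspace_finsupp])

lemma lin_ext_bilinear_eq_0:
  assumes "\<And>i j. i \<in> I \<Longrightarrow> j \<in> J \<Longrightarrow> c i j \<in> finsupp"
    and "\<And>i j. i \<in> I \<Longrightarrow> j \<in> J \<Longrightarrow> lin_ext e (c i j) = 0"
  shows "lin_ext e (\<Sum>i\<in>I. \<Sum>j\<in>J. fscale (f i * g j) (c i j)) = 0"
proof -
  note lin = fs.linear_on_sum[OF linear_on_lin_ext subspace_finsupp]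
  have fin: "fscale (f i * g j) (c i j) \<in> finsupp" if "i \<in> I" "j \<in> J" for i j
    using that by (intro fs.subspace_scale[OF subspace_finsupp] assms(1))
  have "lin_ext e (\<Sum>i\<in>I. \<Sum>j\<in>J. fscale (f i * g j) (c i j))
      = (\<Sum>i\<in>I. \<Sum>j\<in>J. lin_ext e (fscale (f i * g j) (c i j)))"
    using fin by (simp add: lin fs.subspace_sum[OF subspace_finsupp])
  also have "\<dots> = 0"
    using assms by (simp add: lin_ext_fscale)
  finally show ?thesis .
qed

lemma brUU_in_finsupp [simp]: "brUU a b \<in> finsupp"
  unfolding finsupp_def mem_Collect_eq
  by (rule finite_subset[of _ "{a + b, a + b + 2}"]) (auto simp: suppf_def brUU_def bvec_def)

lemma brUV_in_finsupp [simp]: "brUV a b \<in> finsupp"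
  unfolding finsupp_def mem_Collect_eq
  by (rule finite_subset[of _ "{a + b, a + b + 2}"]) (auto simp: suppf_def brUV_def bvec_def)

lemma brO_in_finsupp [simp]: "brO f g \<in> finsupp"
  unfolding brO_def
  by (intro fs.subspace_sum[OF subspace_finsupp] fs.subspace_scale[OF subspace_finsupp] brUU_in_finsupp)

lemma actOP_in_finsupp [simp]: "actOP f g \<in> finsupp"
  unfolding actOP_def
  by (intro fs.subspace_sum[OF subspace_finsupp] fs.subspace_scale[OF subspace_finsupp] brUV_in_finsupp)

lemma brO_bvec [simp]: "brO (bvec a) (bvec b) = (brUU a b :: int \<Rightarrow> 'k::field)"
  unfolding brO_def suppf_bvec by (simp add: bvec_def fun_eq_iff)

lemma actOP_bvec [simp]: "actOP (bvec a) (bvec b) = (brUV a b :: int \<Rightarrow> 'k::field)"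
  unfolding actOP_def suppf_bvec by (simp add: bvec_def fun_eq_iff)

lemma brO_0_right [simp]: "brO f 0 = 0"
  by (simp add: brO_def suppf_def)

lemma actOP_0_right [simp]: "actOP f 0 = 0"
  by (simp add: actOP_def suppf_def)

lemma lin_ext_brO_eq_0:
  assumes "\<And>a b. a \<in> suppf f \<Longrightarrow> b \<in> suppf g \<Longrightarrow> lin_ext e (brUU a b) = 0"
  shows "lin_ext e (brO f g) = (0 :: int \<Rightarrow> 'k::field)"
  unfolding brO_def using assms by (intro lin_ext_bilinear_eq_0) auto

lemma lin_ext_actOP_eq_0:
  assumes "\<And>a b. a \<in> suppf f \<Longrightarrow> b \<in> suppf g \<Longrightarrow> lin_ext e (brUV a b) = 0"
  shows "lin_ext e (actOP f g) = (0 :: int \<Rightarrow> 'k::field)"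
  unfolding actOP_def using assms by (intro lin_ext_bilinear_eq_0) auto

lemma lin_ext_brUU:
  "lin_ext e (brUU a b) = fscale (of_int (a - b)) (e (a + b + 2) - fscale 4 (e (a + b)) :: int \<Rightarrow> 'k::field)"
  unfolding brUU_def
  by (simp add: lin_ext_fscale lin_ext_diff fs.subspace_scale[OF subspace_finsupp]
      fs.subspace_diff[OF subspace_finsupp])

lemma lin_ext_brUV:
  "lin_ext e (brUV a b) =
    fscale (of_int (a - b + 1)) (e (a + b + 2)) - fscale (4 * of_int (a - b)) (e (a + b) :: int \<Rightarrow> 'k::field)"
  unfolding brUV_def
  by (simp add: lin_ext_fscale lin_ext_diff fs.subspace_scale[OF subspace_finsupp])

lemma FO_subset: "FO n \<subseteq> ({f \<in> finsupp. suppf f \<subseteq> {n..}} :: (int \<Rightarrow> 'k::field) set)"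
  unfolding FO_def
proof (rule fs.span_minimal)
  show "fs.subspace ({f \<in> finsupp. suppf f \<subseteq> {n..}} :: (int \<Rightarrow> 'k) set)"
  proof (rule fs.subspaceI)
    fix f g :: "int \<Rightarrow> 'k" and c :: 'k
    assume f: "f \<in> {f \<in> finsupp. suppf f \<subseteq> {n..}}" and g: "g \<in> {f \<in> finsupp. suppf f \<subseteq> {n..}}"
    then have "f i = 0" "g i = 0" if "i < n" for i
      using that by (auto simp: suppf_def)
    then show "f + g \<in> {f \<in> finsupp. suppf f \<subseteq> {n..}}" "fscale c f \<in> {f \<in> finsupp. suppf f \<subseteq> {n..}}"
      using f g fs.subspace_add[OF subspace_finsupp] fs.subspace_scale[OF subspace_finsupp]
      by (auto simp: suppf_def not_le[symmetric])
  qed (simp add: suppf_def)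
qed auto

lemma suppf_FO: "f \<in> FO n \<Longrightarrow> a \<in> suppf f \<Longrightarrow> n \<le> a"
  using FO_subset by fastforce

lemma bvec_in_FO: "n \<le> k \<Longrightarrow> bvec k \<in> FO n"
  unfolding FO_def by (rule fs.span_base) auto

lemma zero_in_FO [simp]: "0 \<in> FO n"
  by (simp add: FO_def fs.span_zero)

lemma Fb_subset: "Fb n \<subseteq> FO n \<times> (FO n :: (int \<Rightarrow> 'k::field) set)"
  unfolding Fb_def
proof (rule ps.span_minimal)
  show "ps.subspace (FO n \<times> (FO n :: (int \<Rightarrow> 'k) set))"
    by (intro subspace_Times) (simp_all add: FO_def)
qed (auto simp: bvec_in_FO)

section \<open>Projections along the derived algebras\<close>

(* The image of U_k under the projection onto span {U_n, ..., U_(2n+2)} along [F_n O, F_n O]: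
   modulo the brackets, U_k = 4 U_(k-2) for k > 2n + 2. *)
function projU :: "int \<Rightarrow> int \<Rightarrow> int \<Rightarrow> 'k::field" where
  "projU n k = (if k \<le> 2 * n + 2 then bvec k else fscale 4 (projU n (k - 2)))"
  by auto
termination by (relation "measure (\<lambda>(n, k). nat (k - 2 * n))") auto

declare projU.simps [simp del]

lemma projU_low: "k \<le> 2 * n + 2 \<Longrightarrow> projU n k = bvec k"
  by (simp add: projU.simps)

lemma projU_high: "2 * n + 2 < k \<Longrightarrow> projU n k = fscale 4 (projU n (k - 2))"
  by (simp add: projU.simps)

definition projV :: "int \<Rightarrow> int \<Rightarrow> int \<Rightarrow> 'k::field" where
  "projV n k = (if k \<le> 2 * n then bvec k else 0)"

lemma projU_in_span:
  assumes "-1 \<le> n" "n \<le> k"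
  shows "(projU n k :: int \<Rightarrow> 'k::field) \<in> fs.span (bvec ` {n..2 * n + 2})"
  using assms(2)
proof (induction "nat (k - n)" arbitrary: k rule: less_induct)
  case less
  show ?case
  proof (cases "k \<le> 2 * n + 2")
    case True
    then show ?thesis using less.prems by (simp add: projU_low fs.span_base)
  next
    case False
    then have "(projU n (k - 2) :: int \<Rightarrow> 'k) \<in> fs.span (bvec ` {n..2 * n + 2})"
      using assms(1) by (intro less.hyps) auto
    then show ?thesis using False by (simp add: projU_high fs.span_scale)
  qed
qed

lemma lin_ext_projU_brUU:
  assumes "n \<le> a" "n \<le> b"
  shows "lin_ext (projU n) (brUU a b) = (0 :: int \<Rightarrow> 'k::field)"
proof (cases "a = b")
  case False
  then have "projU n (a + b + 2) = fscale 4 (projU n (a + b) :: int \<Rightarrow> 'k)"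
    using assms by (simp add: projU_high)
  then show ?thesis by (simp add: lin_ext_brUU)
qed (simp add: lin_ext_brUU)

lemma lin_ext_projV_brUV:
  assumes "n \<le> a" "n \<le> b"
  shows "lin_ext (projV n) (brUV a b) = (0 :: int \<Rightarrow> 'k::field)"
proof -
  have "projV n (a + b + 2) = (0 :: int \<Rightarrow> 'k)" using assms by (simp add: projV_def)
  moreover have "of_int (a - b) = (0 :: 'k) \<or> projV n (a + b) = (0 :: int \<Rightarrow> 'k)"
    using assms by (cases "a = b") (simp_all add: projV_def)
  ultimately show ?thesis by (auto simp: lin_ext_brUV fs.scale_zero_right)
qed

lemma lin_ext_projU_brO:
  assumes "f \<in> FO n" "g \<in> FO n"
  shows "lin_ext (projU n) (brO f g) = (0 :: int \<Rightarrow> 'k::field)"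
  using assms by (intro lin_ext_brO_eq_0 lin_ext_projU_brUU) (auto dest: suppf_FO)

lemma lin_ext_projV_actOP:
  assumes "f \<in> FO n" "g \<in> FO n"
  shows "lin_ext (projV n) (actOP f g) = (0 :: int \<Rightarrow> 'k::field)"
  using assms by (intro lin_ext_actOP_eq_0 lin_ext_projV_brUV) (auto dest: suppf_FO)

lemma bvec_minus_projU_in_subspace:
  fixes M :: "(int \<Rightarrow> 'k::field_char_0) set"
  assumes M: "fs.subspace M" and brackets: "\<And>a b. n \<le> a \<Longrightarrow> n \<le> b \<Longrightarrow> brUU a b \<in> M"
  shows "bvec k - projU n k \<in> M"
proof (induction "nat (k - 2 * n)" arbitrary: k rule: less_induct)
  case less
  show ?case
  proof (cases "k \<le> 2 * n + 2")
    case True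
    then show ?thesis by (simp add: projU_low fs.subspace_0[OF M])
  next
    case False
    define c :: 'k where "c = of_int (k - 2 - 2 * n)"
    have "c \<noteq> 0" unfolding c_def of_int_eq_0_iff using False by linarith
    have "brUU (k - 2 - n) n = fscale c (bvec k - fscale 4 (bvec (k - 2)))"
      by (simp add: brUU_def c_def)
    then have rel: "bvec k - fscale 4 (bvec (k - 2)) = fscale (1 / c) (brUU (k - 2 - n) n)"
      using \<open>c \<noteq> 0\<close> by (simp add: fs.scale_scale)
    have "bvec k - projU n k = (bvec k - fscale 4 (bvec (k - 2))) + fscale 4 (bvec (k - 2) - projU n (k - 2))"
      using False by (simp add: projU_high fs.scale_right_diff_distrib)
    also have "\<dots> = fscale (1 / c) (brUU (k - 2 - n) n) + fscale 4 (bvec (k - 2) - projU n (k - 2))"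
      by (simp only: rel)
    also have "\<dots> \<in> M"
      using False less.hyps
      by (intro fs.subspace_add[OF M] fs.subspace_scale[OF M] brackets) auto
    finally show ?thesis .
  qed
qed

lemma bvec_in_subspace_if_brUV:
  fixes M :: "(int \<Rightarrow> 'k::field_char_0) set"
  assumes M: "fs.subspace M" and brackets: "\<And>a b. n \<le> a \<Longrightarrow> n \<le> b \<Longrightarrow> brUV a b \<in> M"
    and "2 * n < k"
  shows "bvec k \<in> M"
  using assms(3)
proof (induction "nat (k - 2 * n)" arbitrary: k rule: less_induct)
  case less
  consider "k = 2 * n + 1" | "k = 2 * n + 2" | "2 * n + 2 < k" using less.prems by linarith
  then show ?case
  proof cases
    case 1
    have "brUV n (n + 1) = fscale 4 (bvec k :: int \<Rightarrow> 'k)"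
      using 1 by (simp add: brUV_def)
    then have "bvec k = fscale (1 / 4) (brUV n (n + 1) :: int \<Rightarrow> 'k)"
      by (simp add: fs.scale_scale)
    then show ?thesis by (simp add: fs.subspace_scale[OF M] brackets)
  next
    case 2
    have "bvec k = (brUV n n :: int \<Rightarrow> 'k)"
      using 2 by (simp add: brUV_def)
    then show ?thesis by (simp add: brackets)
  next
    case 3
    define c :: 'k where "c = of_int (k - 1 - 2 * n)"
    have "c \<noteq> 0" unfolding c_def of_int_eq_0_iff using 3 by linarith
    have "brUV (k - 2 - n) n = fscale c (bvec k) - fscale (4 * of_int (k - 2 - 2 * n)) (bvec (k - 2))"
      by (simp add: brUV_def c_def)
    then have "bvec k = fscale (1 / c) (brUV (k - 2 - n) n + fscale (4 * of_int (k - 2 - 2 * n)) (bvec (k - 2)))"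
      using \<open>c \<noteq> 0\<close> by (simp add: fs.scale_scale)
    also have "\<dots> \<in> M"
      using 3 less.hyps
      by (intro fs.subspace_scale[OF M] fs.subspace_add[OF M] brackets) auto
    finally show ?thesis .
  qed
qed

lemma bvec_minus_projV_in_subspace:
  fixes M :: "(int \<Rightarrow> 'k::field_char_0) set"
  assumes M: "fs.subspace M" and brackets: "\<And>a b. n \<le> a \<Longrightarrow> n \<le> b \<Longrightarrow> brUV a b \<in> M"
  shows "bvec k - projV n k \<in> M"
  using bvec_in_subspace_if_brUV[OF M brackets] fs.subspace_0[OF M] by (simp add: projV_def)

lemma vector_space_mult: "vector_space ((*) :: 'k::field \<Rightarrow> 'k \<Rightarrow> 'k)"
  by unfold_locales (simp_all add: algebra_simps)

lemma linear_eval: "Vector_Spaces.linear fscale (*) (\<lambda>f :: int \<Rightarrow> 'k::field. f i)"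
  using fs.vector_space_axioms vector_space_mult by (simp add: Vector_Spaces.linear_iff)

lemma linear_fst_eval: "Vector_Spaces.linear pscale (*) (\<lambda>p :: (int \<Rightarrow> 'k::field) \<times> _. fst p i)"
  using ps.vector_space_axioms vector_space_mult by (simp add: Vector_Spaces.linear_iff pscale_def)

lemma linear_snd_eval: "Vector_Spaces.linear pscale (*) (\<lambda>p :: (int \<Rightarrow> 'k::field) \<times> _. snd p i)"
  using ps.vector_space_axioms vector_space_mult by (simp add: Vector_Spaces.linear_iff pscale_def)

lemma independent_bvec: "fs.independent (bvec ` I :: (int \<Rightarrow> 'k::field) set)"
proof (rule fs.independent_if_biorthogonal)
  fix b assume "b \<in> (bvec ` I :: (int \<Rightarrow> 'k) set)"
  then obtain i where "b = bvec i" by blast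
  then show "\<exists>l. Vector_Spaces.linear fscale (*) l \<and> l b \<noteq> 0 \<and> (\<forall>b'\<in>bvec ` I - {b}. l b' = 0)"
    by (intro exI[of _ "\<lambda>f. f i"]) (auto simp: linear_eval bvec_apply split: if_splits)
qed

lemma independent_bvec_pairs:
  "ps.independent ((\<lambda>k. (bvec k, 0)) ` I \<union> (\<lambda>k. (0, bvec k)) ` J :: ((int \<Rightarrow> 'k::field) \<times> (int \<Rightarrow> 'k)) set)"
proof (rule ps.independent_if_biorthogonal)
  fix b assume "b \<in> ((\<lambda>k. (bvec k, 0)) ` I \<union> (\<lambda>k. (0, bvec k)) ` J :: ((int \<Rightarrow> 'k) \<times> (int \<Rightarrow> 'k)) set)"
  then consider i where "b = (bvec i, 0)" | j where "b = (0, bvec j)" by blast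
  then show "\<exists>l. Vector_Spaces.linear pscale (*) l \<and> l b \<noteq> 0 \<and>
      (\<forall>b'\<in>(\<lambda>k. (bvec k, 0)) ` I \<union> (\<lambda>k. (0, bvec k)) ` J - {b}. l b' = 0)"
  proof cases
    case (1 i)
    then show ?thesis by (intro exI[of _ "\<lambda>p. fst p i"]) (auto simp: linear_fst_eval bvec_apply split: if_splits)
  next
    case (2 j)
    then show ?thesis by (intro exI[of _ "\<lambda>p. snd p j"]) (auto simp: linear_snd_eval bvec_apply split: if_splits)
  qed
qed

lemma card_bvec_pairs:
  assumes "finite I" "finite J"
  shows "card ((\<lambda>k. (bvec k, 0)) ` I \<union> (\<lambda>k. (0, bvec k)) ` J :: ((int \<Rightarrow> 'k::field) \<times> (int \<Rightarrow> 'k)) set)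
    = card I + card J"
  using assms by (subst card_Un_disjoint) (auto simp: card_image inj_on_def)

lemma Pair_0_in_span: "f \<in> fs.span A \<Longrightarrow> (f, 0) \<in> ps.span ((\<lambda>a. (a, 0)) ` A)"
  by (simp add: module_hom.span_image[OF module_hom_Pair_0])

lemma zero_Pair_in_span: "g \<in> fs.span A \<Longrightarrow> (0, g) \<in> ps.span ((\<lambda>a. (0, a)) ` A)"
  by (simp add: module_hom.span_image[OF module_hom_0_Pair])

lemma quot_dim_FO:
  fixes n :: int
  assumes "-1 \<le> n"
  shows "quot_dim (fscale :: 'k::field_char_0 \<Rightarrow> _) (FO n) (derived fscale brO (FO n)) = nat (n + 3)"
proof -
  let ?G = "{bvec k | k. n \<le> k} :: (int \<Rightarrow> 'k) set"
  let ?H = "{brO x y | x y. x \<in> FO n \<and> y \<in> FO n} :: (int \<Rightarrow> 'k) set"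
  let ?B = "bvec ` {n..2 * n + 2} :: (int \<Rightarrow> 'k) set"
  have brackets: "brUU a b \<in> fs.span ?H" if "n \<le> a" "n \<le> b" for a b
    using that by (intro fs.span_base CollectI exI[of _ "bvec a"] exI[of _ "bvec b"]) (simp add: bvec_in_FO)
  have "quotient_projection fscale finsupp (fs.span ?G) (fs.span ?H) ?B (lin_ext (projU n))"
  proof (rule fs.quotient_projection_spanI)
    show "lin_ext (projU n) h = 0" if "h \<in> ?H" for h
      using that lin_ext_projU_brO by blast
    show "g - lin_ext (projU n) g \<in> fs.span ?H" if "g \<in> ?G" for g
      using that bvec_minus_projU_in_subspace[OF fs.subspace_span brackets] by auto
    show "lin_ext (projU n) g \<in> fs.span ?B" if "g \<in> ?G" for g
      using that projU_in_span[OF assms] by auto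
    show "lin_ext (projU n) b = b" if "b \<in> ?B" for b
      using that by (auto simp: projU_low)
  qed (auto simp: subspace_finsupp linear_on_lin_ext independent_bvec intro: fs.span_base)
  then have "quot_dim fscale (fs.span ?G) (fs.span ?H) = card ?B"
    by (rule quotient_projection.quot_dim_eq_card)
  then show ?thesis
    using assms by (simp add: FO_def derived_def card_image inj_on_def)
qed

lemma lin_ext_proj_brB:
  assumes "x \<in> Fb n" "y \<in> Fb n"
  shows "(lin_ext (projU n) (fst (brB x y)), lin_ext (projV n) (snd (brB x y))) = (0 :: (int \<Rightarrow> 'k::field) \<times> _)"
proof -
  have "fst x \<in> FO n" "snd x \<in> FO n" "fst y \<in> FO n" "snd y \<in> FO n"
    using assms subsetD[OF Fb_subset, of x n] subsetD[OF Fb_subset, of y n] by (auto simp: mem_Times_iff)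
  then show ?thesis
    unfolding brB_def by (simp add: lin_ext_projU_brO lin_ext_projV_actOP lin_ext_diff zero_prod_def)
qed

lemma Pair_projU_in_span:
  assumes "-1 \<le> n" "n \<le> k"
  shows "(projU n k, 0) \<in> ps.span ((\<lambda>k. (bvec k, 0)) ` {n..2 * n + 2} \<union> A :: ((int \<Rightarrow> 'k::field) \<times> _) set)"
proof -
  have "(\<lambda>a. (a, 0)) ` bvec ` {n..2 * n + 2} \<subseteq> (\<lambda>k. (bvec k, 0)) ` {n..2 * n + 2} \<union> A" by blast
  then show ?thesis using Pair_0_in_span[OF projU_in_span[OF assms]] ps.span_mono by blast
qed

lemma zero_Pair_projV_in_span:
  assumes "n \<le> k"
  shows "(0, projV n k) \<in> ps.span (A \<union> (\<lambda>k. (0, bvec k)) ` {n..2 * n} :: ((int \<Rightarrow> 'k::field) \<times> _) set)"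
  using assms by (auto simp: projV_def ps.span_zero[unfolded zero_prod_def] intro: ps.span_base)

lemma quot_dim_Fb:
  fixes n :: int
  assumes "-1 \<le> n"
  shows "quot_dim (pscale :: 'k::field_char_0 \<Rightarrow> _) (Fb n) (derived pscale brB (Fb n)) = nat (2 * n + 4)"
proof -
  let ?G = "{(bvec k, 0) |k. n \<le> k} \<union> {(0, bvec k) |k. n \<le> k} :: ((int \<Rightarrow> 'k) \<times> (int \<Rightarrow> 'k)) set"
  let ?H = "{brB x y |x y. x \<in> Fb n \<and> y \<in> Fb n} :: ((int \<Rightarrow> 'k) \<times> (int \<Rightarrow> 'k)) set"
  let ?B = "(\<lambda>k. (bvec k, 0)) ` {n..2 * n + 2} \<union> (\<lambda>k. (0, bvec k)) ` {n..2 * n}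
    :: ((int \<Rightarrow> 'k) \<times> (int \<Rightarrow> 'k)) set"
  let ?proj = "\<lambda>p. (lin_ext (projU n) (fst p), lin_ext (projV n) (snd p))"
  have in_Fb: "(bvec k, 0) \<in> Fb n" "(0, bvec k) \<in> Fb n" if "n \<le> k" for k
    using that unfolding Fb_def by (auto intro: ps.span_base)
  have bracket: "brB x y \<in> ps.span ?H" if "x \<in> Fb n" "y \<in> Fb n" for x y
    using that by (intro ps.span_base) blast
  have U_brackets: "brUU a b \<in> (\<lambda>f. (f, 0)) -` ps.span ?H" if "n \<le> a" "n \<le> b" for a b
    using bracket[OF in_Fb(1)[OF that(1)] in_Fb(1)[OF that(2)]] by (simp add: brB_def)
  have V_brackets: "brUV a b \<in> (\<lambda>g. (0, g)) -` ps.span ?H" if "n \<le> a" "n \<le> b" for a b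
    using bracket[OF in_Fb(1)[OF that(1)] in_Fb(2)[OF that(2)]] by (simp add: brB_def)
  have "quotient_projection pscale (finsupp \<times> finsupp) (ps.span ?G) (ps.span ?H) ?B ?proj"
  proof (rule ps.quotient_projection_spanI)
    show "?H \<subseteq> finsupp \<times> finsupp"
      by (auto simp: brB_def intro: fs.subspace_diff[OF subspace_finsupp])
    show "?proj h = 0" if "h \<in> ?H" for h
      using that lin_ext_proj_brB by blast
    show "g - ?proj g \<in> ps.span ?H" if "g \<in> ?G" for g
      using that
        bvec_minus_projU_in_subspace[OF module_hom.subspace_vimage[OF module_hom_Pair_0 ps.subspace_span] U_brackets]
        bvec_minus_projV_in_subspace[OF module_hom.subspace_vimage[OF module_hom_0_Pair ps.subspace_span] V_brackets]
      by auto
    show "?proj g \<in> ps.span ?B" if "g \<in> ?G" for g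
      using that Pair_projU_in_span[OF assms] zero_Pair_projV_in_span by auto
    show "?proj b = b" if "b \<in> ?B" for b
      using that by (auto simp: projU_low projV_def)
  qed (auto simp: subspace_Times subspace_finsupp linear_on_Pair linear_on_lin_ext
      independent_bvec_pairs intro: ps.span_base)
  then have "quot_dim pscale (ps.span ?G) (ps.span ?H) = card ?B"
    by (rule quotient_projection.quot_dim_eq_card)
  then show ?thesis
    using assms by (simp add: Fb_def derived_def card_bvec_pairs)
qed

theorem proposition5p7:
  fixes n :: int
  assumes "n \<ge> -1"
  shows "quot_dim (fscale :: 'k::field_char_0 \<Rightarrow> _) (FO n) (derived fscale brO (FO n)) = nat (n + 3)
    \<and> quot_dim (pscale :: 'k::field_char_0 \<Rightarrow> _) (Fb n) (derived pscale brB (Fb n)) = nat (2 * n + 4)"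
  using quot_dim_FO[OF assms] quot_dim_Fb[OF assms] by simp

end
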